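(* Let $A$ and $B$ be automata with $A\le_{*T}B$. Then there exists an automaton $C$ such that $A\le_H C$ and $C\le_B B$.
   Context: An automaton $A$ consists of a set $\mathrm{states}(A)$ of states, a nonempty set $\mathrm{start}(A)\subseteq\mathrm{states}(A)$ of start states, a set $\mathrm{acts}(A)$ of actions containing a distinguished internal action $\tau$, and a set $\mathrm{steps}(A)\subseteq\mathrm{states}(A)\times\mathrm{acts}(A)\times\mathrm{states}(A)$ of steps; write $s\xrightarrow{a}_A t$ for $(s,a,t)\in\mathrm{steps}(A)$. An execution fragment of $A$ is a finite or infinite alternating sequence $s_0a_1s_1a_2s_2\cdots$ of states and actions, beginning with a state and, if finite, ending with a state, such that $s_{i-1}\xrightarrow{a_i}_A s_i$ for all $i>0$. An execution is an execution fragment whose first state is a start state. The trace of an execution fragment is the subsequence of its non-$\tau$ actions; a trace of $A$ is the trace of some execution of $A$, and $\mathrm{traces}^*(A)$ is the set of finite traces of $A$. $A\le_{*T}B$ means $\mathrm{traces}^*(A)\subseteq\mathrm{traces}^*(B)$. For a relation $R$ write $R[s]=\{u\mid (s,u)\in R\}$. A step refinement from $A$ to $B$ is a partial function $r:\mathrm{states}(A)\rightharpoonup\mathrm{states}(B)$ such that (1) if $s\in\mathrm{start}(A)$ then $s\in\mathrm{dom}(r)$ and $r(s)\in\mathrm{start}(B)$; (2) if $s\xrightarrow{a}_A t$ and $s\in\mathrm{dom}(r)$ then $t\in\mathrm{dom}(r)$ and either $r(s)=r(t)$ and $a=\tau$, or $r(s)\xrightarrow{a}_B r(t)$. A normed forward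 simulation from $A$ to $B$ is a pair $(f,n)$ where $f\subseteq\mathrm{states}(A)\times\mathrm{states}(B)$ and $n:\mathrm{steps}(A)\times\mathrm{states}(B)\to S$ for some set $S$ with a well-founded strict order $<$, such that: (1) if $s\in\mathrm{start}(A)$ then $f[s]\cap\mathrm{start}(B)\neq\emptyset$; (2) if $s\xrightarrow{a}_A t$ and $u\in f[s]$ then (a) $u\in f[t]$ and $a=\tau$, or (b) there is $v\in f[t]$ with $u\xrightarrow{a}_B v$, or (c) there is $v\in f[s]$ with $u\xrightarrow{\tau}_B v$ and $n(s\xrightarrow{a}t,v)<n(s\xrightarrow{a}t,u)$. A normed backward simulation from $A$ to $B$ is a pair $(b,n)$ where $b\subseteq\mathrm{states}(A)\times\mathrm{states}(B)$ is total (every $s\in\mathrm{states}(A)$ has $b[s]\neq\emptyset$) and $n:(\mathrm{steps}(A)\cup\mathrm{start}(A))\times\mathrm{states}(B)\to S$ for some set $S$ with a well-founded strict order $<$, such that: (1) if $s\in\mathrm{start}(A)$ and $u\in b[s]$ then (a) $u\in\mathrm{start}(B)$, or (b) there is $v\in b[s]$ with $v\xrightarrow{\tau}_B u$ and $n(s,v)<n(s,u)$; (2) if $t\xrightarrow{a}_A s$ and $u\in b[s]$ then (a) $u\in b[t]$ and $a=\tau$, or (b) there is $v\in b[t]$ with $v\xrightarrow{a}_B u$, or (c) there is $v\in b[s]$ with $v\xrightarrow{\tau}_B u$ and $n(t\xrightarrow{a}s,v)<n(t\xrightarrow{a}s,u)$. Write $A\le_B B$ if a normed backward simulation from $A$ to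 $B$ exists. A normed history relation from $A$ to $B$ is a pair $(r,n)$ such that $r$ is a step refinement from $B$ to $A$ and $(r^{-1},n)$ is a normed forward simulation from $A$ to $B$. Write $A\le_H B$ if one exists. *)

theory Defs
  imports Main "HOL-Library.Extended_Nat"
begin

text \<open>Automata. The distinguished internal action is a parameter tau shared by all automata.\<close>

record ('s, 'a) automaton =
  states :: "'s set"
  start  :: "'s set"
  acts   :: "'a set"
  steps  :: "('s \<times> 'a \<times> 's) set"

definition is_automaton :: "'a \<Rightarrow> ('s, 'a) automaton \<Rightarrow> bool" where
  "is_automaton tau A \<longleftrightarrow>
     start A \<noteq> {} \<and> start A \<subseteq> states A \<and> tau \<in> acts A \<and>
     steps A \<subseteq> states A \<times> acts A \<times> states A"

text \<open>An execution fragment of length n (n may be infinite): states ss 0, ss 1, ...,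
  and actions as 1, as 2, ... with (ss (i-1), as i, ss i) a step for 0 < i \<le> n.\<close>

definition exec_frag :: "('s, 'a) automaton \<Rightarrow> (nat \<Rightarrow> 's) \<Rightarrow> (nat \<Rightarrow> 'a) \<Rightarrow> enat \<Rightarrow> bool" where
  "exec_frag A ss as n \<longleftrightarrow> ss 0 \<in> states A \<and>
     (\<forall>i. enat (Suc i) \<le> n \<longrightarrow> (ss i, as (Suc i), ss (Suc i)) \<in> steps A)"

definition execution :: "('s, 'a) automaton \<Rightarrow> (nat \<Rightarrow> 's) \<Rightarrow> (nat \<Rightarrow> 'a) \<Rightarrow> enat \<Rightarrow> bool" where
  "execution A ss as n \<longleftrightarrow> exec_frag A ss as n \<and> ss 0 \<in> start A"

definition visible_idx :: "'a \<Rightarrow> (nat \<Rightarrow> 'a) \<Rightarrow> enat \<Rightarrow> nat set" where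
  "visible_idx tau as n = {i. 0 < i \<and> enat i \<le> n \<and> as i \<noteq> tau}"

text \<open>The trace (meaningful when the set of visible indices is finite).\<close>
definition trace_of :: "'a \<Rightarrow> (nat \<Rightarrow> 'a) \<Rightarrow> enat \<Rightarrow> 'a list" where
  "trace_of tau as n = map as (sorted_list_of_set (visible_idx tau as n))"

definition fin_traces :: "'a \<Rightarrow> ('s, 'a) automaton \<Rightarrow> 'a list set" where
  "fin_traces tau A = {\<beta>. \<exists>ss as n. execution A ss as n \<and> finite (visible_idx tau as n)
                          \<and> \<beta> = trace_of tau as n}"

definition fin_trace_incl :: "'a \<Rightarrow> ('s, 'a) automaton \<Rightarrow> ('t, 'a) automaton \<Rightarrow> bool" where
  "fin_trace_incl tau A B \<longleftrightarrow> fin_traces tau A \<subseteq> fin_traces tau B"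

definition step_refinement :: "'a \<Rightarrow> ('s, 'a) automaton \<Rightarrow> ('t, 'a) automaton \<Rightarrow> ('s \<Rightarrow> 't option) \<Rightarrow> bool" where
  "step_refinement tau A B r \<longleftrightarrow>
     (\<forall>s \<in> start A. \<exists>u. r s = Some u \<and> u \<in> start B) \<and>
     (\<forall>s a t. (s, a, t) \<in> steps A \<and> s \<in> dom r \<longrightarrow>
        t \<in> dom r \<and> ((the (r s) = the (r t) \<and> a = tau) \<or> (the (r s), a, the (r t)) \<in> steps B))"

definition wf_strict_order :: "('n \<times> 'n) set \<Rightarrow> bool" where
  "wf_strict_order lt \<longleftrightarrow> wf lt \<and> trans lt"

definition normed_forward_sim ::
  "'a \<Rightarrow> ('s, 'a) automaton \<Rightarrow> ('t, 'a) automaton \<Rightarrow> ('s \<times> 't) set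
   \<Rightarrow> ('s \<times> 'a \<times> 's \<Rightarrow> 't \<Rightarrow> 'n) \<Rightarrow> ('n \<times> 'n) set \<Rightarrow> bool" where
  "normed_forward_sim tau A B f n lt \<longleftrightarrow> wf_strict_order lt \<and>
     (\<forall>s \<in> start A. f `` {s} \<inter> start B \<noteq> {}) \<and>
     (\<forall>s a t u. (s, a, t) \<in> steps A \<and> u \<in> f `` {s} \<longrightarrow>
        (u \<in> f `` {t} \<and> a = tau) \<or>
        (\<exists>v \<in> f `` {t}. (u, a, v) \<in> steps B) \<or>
        (\<exists>v \<in> f `` {s}. (u, tau, v) \<in> steps B \<and> (n (s, a, t) v, n (s, a, t) u) \<in> lt))"

text \<open>Norm domain steps(A) \<union> start(A) encoded by a sum type: Inl step, Inr start state.\<close>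
definition normed_backward_sim ::
  "'a \<Rightarrow> ('s, 'a) automaton \<Rightarrow> ('t, 'a) automaton \<Rightarrow> ('s \<times> 't) set
   \<Rightarrow> (('s \<times> 'a \<times> 's) + 's \<Rightarrow> 't \<Rightarrow> 'n) \<Rightarrow> ('n \<times> 'n) set \<Rightarrow> bool" where
  "normed_backward_sim tau A B b n lt \<longleftrightarrow> wf_strict_order lt \<and>
     (\<forall>s \<in> states A. b `` {s} \<noteq> {}) \<and>
     (\<forall>s \<in> start A. \<forall>u \<in> b `` {s}.
        u \<in> start B \<or> (\<exists>v \<in> b `` {s}. (v, tau, u) \<in> steps B \<and> (n (Inr s) v, n (Inr s) u) \<in> lt)) \<and>
     (\<forall>t a s u. (t, a, s) \<in> steps A \<and> u \<in> b `` {s} \<longrightarrow>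
        (u \<in> b `` {t} \<and> a = tau) \<or>
        (\<exists>v \<in> b `` {t}. (v, a, u) \<in> steps B) \<or>
        (\<exists>v \<in> b `` {s}. (v, tau, u) \<in> steps B \<and> (n (Inl (t, a, s)) v, n (Inl (t, a, s)) u) \<in> lt))"

text \<open>The norm codomain S is fixed to nat (with an arbitrary well-founded strict order on it).\<close>
definition le_B :: "'a \<Rightarrow> ('s, 'a) automaton \<Rightarrow> ('t, 'a) automaton \<Rightarrow> bool" where
  "le_B tau A B \<longleftrightarrow> (\<exists>b (n :: ('s \<times> 'a \<times> 's) + 's \<Rightarrow> 't \<Rightarrow> nat) lt. normed_backward_sim tau A B b n lt)"

definition normed_history_rel ::
  "'a \<Rightarrow> ('s, 'a) automaton \<Rightarrow> ('t, 'a) automaton \<Rightarrow> ('t \<Rightarrow> 's option)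
   \<Rightarrow> ('s \<times> 'a \<times> 's \<Rightarrow> 't \<Rightarrow> 'n) \<Rightarrow> ('n \<times> 'n) set \<Rightarrow> bool" where
  "normed_history_rel tau A B r n lt \<longleftrightarrow>
     step_refinement tau B A r \<and> normed_forward_sim tau A B {(s, u). r u = Some s} n lt"

definition le_H :: "'a \<Rightarrow> ('s, 'a) automaton \<Rightarrow> ('t, 'a) automaton \<Rightarrow> bool" where
  "le_H tau A B \<longleftrightarrow> (\<exists>r (n :: ('s \<times> 'a \<times> 's) \<Rightarrow> 't \<Rightarrow> nat) lt. normed_history_rel tau A B r n lt)"

end

theory Submission
  imports Defs
begin

text \<open>Let C be A with every state annotated by the trace of an execution of A leading to it.
  Forgetting the annotation is a step refinement from C to A whose inverse is a forward
  simulation with trivial norm, so A \<le>H C. Relate a state (s, \<beta>) of C to every state of B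
  reached by an execution with trace \<beta>; by trace inclusion this relation is total. Going
  backwards along a step of C, take a shortest such execution of B: its last step is either
  the matching visible step or a \<tau>-step from a state whose shortest execution is shorter,
  and this length is the norm of a backward simulation, so C \<le>B B.\<close>

definition snoc_visible :: "'a \<Rightarrow> 'a list \<Rightarrow> 'a \<Rightarrow> 'a list" where
  "snoc_visible tau \<beta> a = (if a = tau then \<beta> else \<beta> @ [a])"

lemma trace_of_enat:
  "trace_of tau as (enat m) = filter (\<lambda>a. a \<noteq> tau) (map as [1..<Suc m])"
proof -
  have "visible_idx tau as (enat m) = set (filter (\<lambda>i. as i \<noteq> tau) [1..<Suc m])"
    by (auto simp: visible_idx_def)
  then have "sorted_list_of_set (visible_idx tau as (enat m)) = filter (\<lambda>i. as i \<noteq> tau) [1..<Suc m]"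
    by (metis sorted_list_of_set_sort_remdups distinct_filter distinct_upt remdups_id_iff_distinct
        sorted_wrt_filter sorted_sort_id sorted_upt)
  then show ?thesis
    by (simp add: trace_of_def filter_map comp_def)
qed

lemma trace_of_enat_0 [simp]: "trace_of tau as (enat 0) = []"
  by (simp add: trace_of_enat)

lemma trace_of_enat_Suc:
  "trace_of tau as (enat (Suc m)) = snoc_visible tau (trace_of tau as (enat m)) (as (Suc m))"
  by (simp add: trace_of_enat snoc_visible_def)

lemma trace_of_enat_cong:
  assumes "\<And>i. i \<le> m \<Longrightarrow> as' i = as i"
  shows "trace_of tau as' (enat m) = trace_of tau as (enat m)"
proof -
  have "map as' [1..<Suc m] = map as [1..<Suc m]"
    using assms by (intro map_cong) auto
  then show ?thesis
    by (simp only: trace_of_enat)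
qed

lemma finite_visible_idx_enat: "finite (visible_idx tau as (enat m))"
  by (rule finite_subset[of _ "{..m}"]) (auto simp: visible_idx_def)

lemma trace_of_eq_prefix:
  assumes "finite (visible_idx tau as n)"
  obtains m where "enat m \<le> n" "trace_of tau as n = trace_of tau as (enat m)"
proof (cases n)
  case (enat m)
  then show ?thesis using that by blast
next
  case infinity
  obtain m where "\<forall>i \<in> visible_idx tau as n. i \<le> m"
    using assms finite_nat_set_iff_bounded_le by blast
  then have "visible_idx tau as n = visible_idx tau as (enat m)"
    using infinity by (auto simp: visible_idx_def)
  then show ?thesis
    using that infinity by (simp add: trace_of_def)
qed

inductive reaches :: "'a \<Rightarrow> ('s, 'a) automaton \<Rightarrow> 's \<Rightarrow> 'a list \<Rightarrow> nat \<Rightarrow> bool"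
  for tau X where
  reaches_start: "u \<in> start X \<Longrightarrow> reaches tau X u [] 0"
| reaches_step: "reaches tau X v \<beta> k \<Longrightarrow> (v, a, u) \<in> steps X \<Longrightarrow>
    reaches tau X u (snoc_visible tau \<beta> a) (Suc k)"

abbreviation reachable :: "'a \<Rightarrow> ('s, 'a) automaton \<Rightarrow> 's \<Rightarrow> 'a list \<Rightarrow> bool" where
  "reachable tau X u \<beta> \<equiv> \<exists>k. reaches tau X u \<beta> k"

lemma reachable_start: "u \<in> start X \<Longrightarrow> reachable tau X u []"
  by (blast intro: reaches_start)

lemma reachable_step:
  "reachable tau X v \<beta> \<Longrightarrow> (v, a, u) \<in> steps X \<Longrightarrow> reachable tau X u (snoc_visible tau \<beta> a)"
  by (blast intro: reaches_step)

lemma reaches_imp_execution: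
  assumes "start X \<subseteq> states X"
  shows "reaches tau X u \<beta> k \<Longrightarrow>
    \<exists>ss as. execution X ss as (enat k) \<and> ss k = u \<and> trace_of tau as (enat k) = \<beta>"
proof (induction rule: reaches.induct)
  case (reaches_start u)
  then show ?case
    using assms by (intro exI[of _ "\<lambda>_. u"] exI[of _ "\<lambda>_. tau"]) (auto simp: execution_def exec_frag_def)
next
  case (reaches_step v \<beta> k a u)
  then obtain ss as where ex: "execution X ss as (enat k)" "ss k = v" "trace_of tau as (enat k) = \<beta>"
    by blast
  have "execution X (ss(Suc k := u)) (as(Suc k := a)) (enat (Suc k))"
    using ex(1,2) reaches_step.hyps(2)
    unfolding execution_def exec_frag_def by (auto simp: less_Suc_eq_le le_Suc_eq)
  moreover have "trace_of tau (as(Suc k := a)) (enat (Suc k)) = snoc_visible tau \<beta> a"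
    using ex(3) trace_of_enat_cong[of k "as(Suc k := a)" as tau] by (simp add: trace_of_enat_Suc)
  ultimately show ?case
    by (metis fun_upd_same)
qed

lemma execution_imp_reaches:
  assumes "execution X ss as n" and "enat m \<le> n"
  shows "reaches tau X (ss m) (trace_of tau as (enat m)) m"
  using assms(2)
proof (induction m)
  case 0
  then show ?case
    using assms(1) by (auto simp: execution_def intro: reaches_start)
next
  case (Suc m)
  have "enat m \<le> n"
    using order_trans[OF _ Suc.prems] by simp
  moreover have "(ss m, as (Suc m), ss (Suc m)) \<in> steps X"
    using assms(1) Suc.prems by (auto simp: execution_def exec_frag_def)
  ultimately show ?case
    using reaches_step[OF Suc.IH] by (simp add: trace_of_enat_Suc)
qed

lemma fin_traces_imp_reachable:
  assumes "\<beta> \<in> fin_traces tau X"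
  obtains u where "reachable tau X u \<beta>"
proof -
  obtain ss as n where ex: "execution X ss as n" "finite (visible_idx tau as n)" "\<beta> = trace_of tau as n"
    using assms by (auto simp: fin_traces_def)
  obtain m where "enat m \<le> n" "\<beta> = trace_of tau as (enat m)"
    using trace_of_eq_prefix[OF ex(2)] ex(3) by metis
  then show ?thesis
    using that execution_imp_reaches[OF ex(1)] by blast
qed

lemma reaches_imp_fin_traces:
  assumes "start X \<subseteq> states X" and "reaches tau X u \<beta> k"
  shows "\<beta> \<in> fin_traces tau X"
proof -
  obtain ss as where "execution X ss as (enat k)" "trace_of tau as (enat k) = \<beta>"
    using reaches_imp_execution[OF assms] by blast
  then show ?thesis
    unfolding fin_traces_def using finite_visible_idx_enat by (intro CollectI exI) auto
qed

lemma fin_trace_incl_reachable: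
  assumes "start A \<subseteq> states A" and "fin_trace_incl tau A B" and "reachable tau A s \<beta>"
  obtains u where "reachable tau B u \<beta>"
proof -
  obtain k where "reaches tau A s \<beta> k"
    using assms(3) ..
  then have "\<beta> \<in> fin_traces tau A"
    by (rule reaches_imp_fin_traces[OF assms(1)])
  then have "\<beta> \<in> fin_traces tau B"
    using assms(2) by (auto simp: fin_trace_incl_def)
  then show ?thesis
    using that by (rule fin_traces_imp_reachable)
qed

definition shortest_reach :: "'a \<Rightarrow> ('s, 'a) automaton \<Rightarrow> 's \<Rightarrow> 'a list \<Rightarrow> nat" where
  "shortest_reach tau X u \<beta> = (LEAST k. reaches tau X u \<beta> k)"

lemma shortest_reach_le: "reaches tau X u \<beta> k \<Longrightarrow> shortest_reach tau X u \<beta> \<le> k"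
  unfolding shortest_reach_def by (rule Least_le)

lemma shortest_reach_last_step:
  assumes "reachable tau X u \<beta>"
  obtains "\<beta> = []" "u \<in> start X"
  | v where "(v, tau, u) \<in> steps X" "reachable tau X v \<beta>"
      "shortest_reach tau X v \<beta> < shortest_reach tau X u \<beta>"
  | v \<gamma> c where "c \<noteq> tau" "\<beta> = \<gamma> @ [c]" "(v, c, u) \<in> steps X" "reachable tau X v \<gamma>"
proof -
  have "reaches tau X u \<beta> (shortest_reach tau X u \<beta>)"
    using assms unfolding shortest_reach_def by (rule LeastI_ex)
  then show ?thesis
  proof cases
    case reaches_start
    then show ?thesis using that(1) by blast
  next
    case (reaches_step v \<gamma> k a)
    show ?thesis
    proof (cases "a = tau")
      case True
      then have "reaches tau X v \<beta> k"
        using reaches_step by (simp add: snoc_visible_def)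
      moreover have "shortest_reach tau X v \<beta> < shortest_reach tau X u \<beta>"
        using shortest_reach_le[OF calculation] reaches_step(2) by simp
      ultimately show ?thesis
        using that(2) reaches_step(4) True by blast
    next
      case False
      then have "\<beta> = \<gamma> @ [a]"
        using reaches_step(1) by (simp add: snoc_visible_def)
      then show ?thesis
        using that(3) reaches_step(3,4) False by blast
    qed
  qed
qed

lemma reachable_Nil_last_step:
  assumes "reachable tau X u []"
  shows "u \<in> start X \<or>
    (\<exists>v. reachable tau X v [] \<and> (v, tau, u) \<in> steps X \<and> shortest_reach tau X v [] < shortest_reach tau X u [])"
  using assms by (cases rule: shortest_reach_last_step) auto

lemma reachable_snoc_visible_last_step:
  assumes "reachable tau X u (snoc_visible tau \<beta> a)"
  shows "(reachable tau X u \<beta> \<and> a = tau) \<or> (\<exists>v. reachable tau X v \<beta> \<and> (v, a, u) \<in> steps X) \<or>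
    (\<exists>v. reachable tau X v (snoc_visible tau \<beta> a) \<and> (v, tau, u) \<in> steps X \<and>
      shortest_reach tau X v (snoc_visible tau \<beta> a) < shortest_reach tau X u (snoc_visible tau \<beta> a))"
proof (cases "a = tau")
  case True
  then show ?thesis
    using assms by (simp add: snoc_visible_def)
next
  case False
  with assms have "reachable tau X u (\<beta> @ [a])"
    by (simp add: snoc_visible_def)
  then show ?thesis
  proof (cases rule: shortest_reach_last_step)
    case (2 v)
    then show ?thesis
      using False unfolding snoc_visible_def by auto
  next
    case (3 v \<gamma> c)
    then show ?thesis
      by blast
  qed simp
qed

definition trace_history :: "'a \<Rightarrow> ('s, 'a) automaton \<Rightarrow> ('s \<times> 'a list, 'a) automaton" where
  "trace_history tau A =
     \<lparr>states = {(s, \<beta>). reachable tau A s \<beta>},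
      start = {(s, []) | s. s \<in> start A},
      acts = acts A,
      steps = {((s, \<beta>), a, (t, snoc_visible tau \<beta> a)) | s \<beta> a t.
                 reachable tau A s \<beta> \<and> (s, a, t) \<in> steps A}\<rparr>"

lemma is_automaton_trace_history:
  assumes "is_automaton tau A"
  shows "is_automaton tau (trace_history tau A)"
proof -
  have "start (trace_history tau A) \<noteq> {}" "start (trace_history tau A) \<subseteq> states (trace_history tau A)"
    using assms by (auto simp: is_automaton_def trace_history_def intro: reachable_start)
  moreover have "steps (trace_history tau A) \<subseteq>
      states (trace_history tau A) \<times> acts (trace_history tau A) \<times> states (trace_history tau A)"
    using assms by (fastforce simp: is_automaton_def trace_history_def intro: reachable_step)
  ultimately show ?thesis
    using assms by (simp add: is_automaton_def trace_history_def)
qed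

definition trace_history_proj :: "'a \<Rightarrow> ('s, 'a) automaton \<Rightarrow> 's \<times> 'a list \<Rightarrow> 's option" where
  "trace_history_proj tau A = (\<lambda>(s, \<beta>). if reachable tau A s \<beta> then Some s else None)"

lemma trace_history_proj_inv_image:
  "{(s, u). trace_history_proj tau A u = Some s} `` {s} = {(s, \<beta>) | \<beta>. reachable tau A s \<beta>}"
  by (auto simp: trace_history_proj_def split: if_splits)

lemma step_refinement_trace_history_proj:
  "step_refinement tau (trace_history tau A) A (trace_history_proj tau A)"
  unfolding step_refinement_def
proof (rule conjI; intro allI impI ballI)
  fix u assume "u \<in> start (trace_history tau A)"
  then show "\<exists>s. trace_history_proj tau A u = Some s \<and> s \<in> start A"
    by (auto simp: trace_history_def trace_history_proj_def intro: reachable_start)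
next
  fix u a v assume "(u, a, v) \<in> steps (trace_history tau A) \<and> u \<in> dom (trace_history_proj tau A)"
  then obtain s \<beta> t where "u = (s, \<beta>)" "v = (t, snoc_visible tau \<beta> a)"
    "reachable tau A s \<beta>" "(s, a, t) \<in> steps A"
    by (auto simp: trace_history_def)
  moreover have "reachable tau A t (snoc_visible tau \<beta> a)"
    using calculation(3,4) by (rule reachable_step)
  ultimately show "v \<in> dom (trace_history_proj tau A) \<and>
      (the (trace_history_proj tau A u) = the (trace_history_proj tau A v) \<and> a = tau \<or>
       (the (trace_history_proj tau A u), a, the (trace_history_proj tau A v)) \<in> steps A)"
    by (simp add: trace_history_proj_def dom_def)
qed

lemma normed_forward_sim_trace_history:
  "normed_forward_sim tau A (trace_history tau A)
     {(s, u). trace_history_proj tau A u = Some s} (\<lambda>_ _. 0::nat) {}"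
  unfolding normed_forward_sim_def wf_strict_order_def trace_history_proj_inv_image
proof (intro conjI allI impI ballI)
  fix s assume "s \<in> start A"
  then have "(s, []) \<in> {(s, \<beta>) | \<beta>. reachable tau A s \<beta>} \<inter> start (trace_history tau A)"
    by (auto simp: trace_history_def intro: reachable_start)
  then show "{(s, \<beta>) | \<beta>. reachable tau A s \<beta>} \<inter> start (trace_history tau A) \<noteq> {}"
    by blast
next
  fix s a t u assume "(s, a, t) \<in> steps A \<and> u \<in> {(s, \<beta>) | \<beta>. reachable tau A s \<beta>}"
  then obtain \<beta> where "u = (s, \<beta>)" "reachable tau A s \<beta>" "(s, a, t) \<in> steps A"
    by blast
  then have "(t, snoc_visible tau \<beta> a) \<in> {(t, \<beta>) | \<beta>. reachable tau A t \<beta>}"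
    "(u, a, (t, snoc_visible tau \<beta> a)) \<in> steps (trace_history tau A)"
    by (auto simp: trace_history_def intro: reachable_step)
  then show "u \<in> {(t, \<beta>) | \<beta>. reachable tau A t \<beta>} \<and> a = tau \<or>
      (\<exists>v \<in> {(t, \<beta>) | \<beta>. reachable tau A t \<beta>}. (u, a, v) \<in> steps (trace_history tau A)) \<or>
      (\<exists>v \<in> {(s, \<beta>) | \<beta>. reachable tau A s \<beta>}. (u, tau, v) \<in> steps (trace_history tau A) \<and> (0, 0) \<in> {})"
    by blast
qed (simp_all add: trans_def)

lemma le_H_trace_history: "le_H tau A (trace_history tau A)"
  unfolding le_H_def normed_history_rel_def
  using step_refinement_trace_history_proj normed_forward_sim_trace_history by (intro exI conjI)

lemma le_B_trace_history:
  fixes A :: "('s, 'a) automaton" and B :: "('t, 'a) automaton"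
  assumes "start A \<subseteq> states A" and "fin_trace_incl tau A B"
  shows "le_B tau (trace_history tau A) B"
proof -
  let ?C = "trace_history tau A"
  define b :: "(('s \<times> 'a list) \<times> 't) set" where "b = {((s, \<beta>), u). reachable tau B u \<beta>}"
  define n :: "(('s \<times> 'a list) \<times> 'a \<times> ('s \<times> 'a list)) + ('s \<times> 'a list) \<Rightarrow> 't \<Rightarrow> nat"
    where "n = (\<lambda>x u. shortest_reach tau B u (snd (case x of Inl (_, _, s) \<Rightarrow> s | Inr s \<Rightarrow> s)))"
  have b_image: "b `` {(s, \<beta>)} = {u. reachable tau B u \<beta>}" for s \<beta>
    by (simp add: b_def)
  have total: "b `` {s} \<noteq> {}" if "s \<in> states ?C" for s
  proof -
    obtain s0 \<beta> where s: "s = (s0, \<beta>)" and "reachable tau A s0 \<beta>"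
      using \<open>s \<in> states ?C\<close> by (auto simp: trace_history_def)
    then obtain u where "reachable tau B u \<beta>"
      using fin_trace_incl_reachable[OF assms] by blast
    then show ?thesis
      using s b_image by blast
  qed
  have start_clause: "u \<in> start B \<or>
      (\<exists>v \<in> b `` {s}. (v, tau, u) \<in> steps B \<and> (n (Inr s) v, n (Inr s) u) \<in> less_than)"
    if "s \<in> start ?C" "u \<in> b `` {s}" for s u
  proof -
    obtain s0 where s: "s = (s0, [])"
      using \<open>s \<in> start ?C\<close> by (auto simp: trace_history_def)
    then have "reachable tau B u []"
      using \<open>u \<in> b `` {s}\<close> b_image by blast
    then show ?thesis
      using reachable_Nil_last_step by (simp add: s b_image n_def)
  qed
  have step_clause: "(u \<in> b `` {t} \<and> a = tau) \<or> (\<exists>v \<in> b `` {t}. (v, a, u) \<in> steps B) \<or>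
      (\<exists>v \<in> b `` {s}. (v, tau, u) \<in> steps B \<and> (n (Inl (t, a, s)) v, n (Inl (t, a, s)) u) \<in> less_than)"
    if "(t, a, s) \<in> steps ?C" "u \<in> b `` {s}" for t a s u
  proof -
    obtain t0 \<beta> s0 where ts: "t = (t0, \<beta>)" "s = (s0, snoc_visible tau \<beta> a)"
      using \<open>(t, a, s) \<in> steps ?C\<close> by (auto simp: trace_history_def)
    then have "reachable tau B u (snoc_visible tau \<beta> a)"
      using \<open>u \<in> b `` {s}\<close> b_image by blast
    then show ?thesis
      using reachable_snoc_visible_last_step by (simp add: ts b_image n_def)
  qed
  have "normed_backward_sim tau ?C B b n less_than"
    unfolding normed_backward_sim_def wf_strict_order_def
    using total start_clause step_clause by (simp add: trans_less_than)
  then show ?thesis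
    unfolding le_B_def by blast
qed

theorem mainTheorem3:
  fixes tau :: 'a and A :: "('sa, 'a) automaton" and B :: "('sb, 'a) automaton"
  assumes "is_automaton tau A" and "is_automaton tau B"
    and "fin_trace_incl tau A B"
  shows "\<exists>C :: ('sa \<times> 'a list, 'a) automaton.
           is_automaton tau C \<and> le_H tau A C \<and> le_B tau C B"
proof -
  have "start A \<subseteq> states A"
    using assms(1) by (simp add: is_automaton_def)
  then have "le_B tau (trace_history tau A) B"
    using assms(3) by (rule le_B_trace_history)
  then show ?thesis
    using is_automaton_trace_history[OF assms(1)] le_H_trace_history by (intro exI conjI)
qed

end
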